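(* Consider the setting in the context. Let $\mathcal F=\{i_0,\dots,i_{\bar h-1}\}\subseteq[\bar n]$ be $\bar h$ distinct racks, $p\in[\bar h]$, $S=S_{\lfloor p/(\bar h-\delta+1)\rfloor}$, and let $\mathbf{C}$ be any codeword. (1) Let $b\in[1,u-v]$ and $\mathcal R\subseteq[\bar n]\setminus\mathcal F$ with $|\mathcal R|=\bar d$. For every $m\in[b]$ and every $a\in[l]$ with $a|_S\in\mathcal V_0$, the quantities $\sum_{g=0}^{u-1}\theta^{gm}c_{i_pu+g,a}$, $\sum_{g=0}^{u-1}\theta^{gm}c_{i_pu+g,a(i_p,a_{i_p}\oplus1)}$ and $H_{i_p,i}(a,m)$ for $i\in\mathcal F\setminus\{i_p\}$ are determined by (are linear functions of) the values $\{H_{i_p,j}(a',m): j\in\mathcal R,\ m\in[b],\ a'\in[l],\ a'|_S\in\mathcal V_0\}$. (2) Let $b\in[u-v+1,u]$ and $\mathcal R'\subseteq[\bar n]\setminus\mathcal F$ with $|\mathcal R'|=\bar d+1$. For every $m\in[u-v,b)$ and every $a\in[l]$ with $a|_S\in\mathcal V_0$, the same quantities are determined by (are linear functions of) the values $\{H_{i_p,j}(a',m): j\in\mathcal R',\ m\in[u-v,b),\ a'\in[l],\ a'|_S\in\mathcal V_0\}$.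
   Context: $[N]=\{0,\dots,N-1\}$. Integers: $\bar n$, $u>1$, $\bar k$, $0\le v<u$, $n=\bar nu$, $k=\bar ku+v$, $r=n-k$, $\bar r=\bar n-\bar k$; $\bar d=\bar k+1$; $\bar h,\delta$ with $\delta\in[1,\bar h)$, $\bar d\le\bar n-\bar h$, $\bar h-\delta+2=2^{\bar m}$ for some integer $\bar m\ge1$, and $(\bar h-\delta+1)\mid\bar h$. $l=2^{\bar n}$. $\mathbb{F}$ is a finite field with $|\mathbb{F}|\ge2n+1$ containing an element $\theta$ of multiplicative order $u$; $\xi$ is a primitive element and $\lambda_{i,j}=\xi^{2i+j}$ for $i\in[\bar n]$, $j\in\{0,1\}$. For $a\in[l]$ write $a=(a_{\bar n-1},\dots,a_0)$ in binary, and $a(i,j)$ is $a$ with its $i$-th bit replaced by $j$; $\oplus$ is addition mod 2. The code $\mathbf{C}$ consists of all $(c_{iu+g,a})_{i\in[\bar n],g\in[u],a\in[l]}$ over $\mathbb{F}$ (node $iu+g$ stores $(c_{iu+g,a})_{a\in[l]}$) with $\sum_{i=0}^{\bar n-1}\sum_{g=0}^{u-1}\theta^{gt}\lambda_{i,a_i}^tc_{iu+g,a}=0$ for all $t\in[r]$, $a\in[l]$. For distinct racks $i,j$, $a\in[l]$ and integer $m$, $H_{i,j}(a,m)=\sum_{g=0}^{u-1}\theta^{gm}c_{ju+g,a}+\sum_{g=0}^{u-1}\theta^{gm}c_{ju+g,a(i,a_i\oplus1)}$. $\mathcal V_0\subseteq\mathbb{F}_2^{2^{\bar m}-1}$ is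 the binary Hamming code of length $2^{\bar m}-1$, i.e. the kernel of a $\bar m\times(2^{\bar m}-1)$ binary matrix whose columns are all the nonzero vectors of $\mathbb{F}_2^{\bar m}$. For $q\in[\bar h/(\bar h-\delta+1))$, $S_q=\{i_{q'}: q'\in[q(\bar h-\delta+1),(q+1)(\bar h-\delta+1))\}$. For $J=\{j_0<\dots<j_{e-1}\}\subseteq[\bar n]$, the puncturing $a|_J=(a_{j_{e-1}},\dots,a_{j_0})\in\mathbb{F}_2^{e}$. *)

theory Defs
  imports Main
begin

definition abit :: "nat \<Rightarrow> nat \<Rightarrow> nat" where
  "abit a i = (a div 2 ^ i) mod 2"

definition repl :: "nat \<Rightarrow> nat \<Rightarrow> nat \<Rightarrow> nat" where
  "repl a i j = a - abit a i * 2 ^ i + j * 2 ^ i"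

definition flipb :: "nat \<Rightarrow> nat \<Rightarrow> nat" where
  "flipb a i = repl a i ((abit a i + 1) mod 2)"

definition mult_order :: "'a::field \<Rightarrow> nat \<Rightarrow> bool" where
  "mult_order x u \<longleftrightarrow> 0 < u \<and> x ^ u = 1 \<and> (\<forall>k. 0 < k \<and> k < u \<longrightarrow> x ^ k \<noteq> 1)"

definition primitive_elem :: "'a::{field,finite} \<Rightarrow> bool" where
  "primitive_elem x \<longleftrightarrow> mult_order x (card (UNIV :: 'a set) - 1)"

definition lam :: "'a::field \<Rightarrow> nat \<Rightarrow> nat \<Rightarrow> 'a" where
  "lam xi i j = xi ^ (2 * i + j)"

definition in_code :: "'a::field \<Rightarrow> 'a \<Rightarrow> nat \<Rightarrow> nat \<Rightarrow> nat \<Rightarrow> (nat \<Rightarrow> nat \<Rightarrow> 'a) \<Rightarrow> bool" where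
  "in_code theta xi nbar u r c \<longleftrightarrow>
     (\<forall>t<r. \<forall>a<2 ^ nbar.
        (\<Sum>i<nbar. \<Sum>g<u. theta ^ (g * t) * (lam xi i (abit a i)) ^ t * c (i * u + g) a) = 0)"

definition rack_sum :: "'a::field \<Rightarrow> nat \<Rightarrow> (nat \<Rightarrow> nat \<Rightarrow> 'a) \<Rightarrow> nat \<Rightarrow> nat \<Rightarrow> nat \<Rightarrow> 'a" where
  "rack_sum theta u c i a m = (\<Sum>g<u. theta ^ (g * m) * c (i * u + g) a)"

definition Hq :: "'a::field \<Rightarrow> nat \<Rightarrow> (nat \<Rightarrow> nat \<Rightarrow> 'a) \<Rightarrow> nat \<Rightarrow> nat \<Rightarrow> nat \<Rightarrow> nat \<Rightarrow> 'a" where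
  "Hq theta u c i j a m =
     (\<Sum>g<u. theta ^ (g * m) * c (j * u + g) a) + (\<Sum>g<u. theta ^ (g * m) * c (j * u + g) (flipb a i))"

definition puncture :: "nat \<Rightarrow> nat set \<Rightarrow> nat \<Rightarrow> nat" where
  "puncture a J t = abit a (sorted_list_of_set J ! t)"

text \<open>A column ordering of the Hamming parity-check matrix: column t (t < 2^m - 1) is the
  nonzero vector of F_2^m with binary encoding col t; every nonzero vector occurs exactly once.\<close>
definition hamming_cols :: "nat \<Rightarrow> (nat \<Rightarrow> nat) \<Rightarrow> bool" where
  "hamming_cols m col \<longleftrightarrow> bij_betw col {..<2 ^ m - 1} {1..<2 ^ m}"

definition in_hamming :: "nat \<Rightarrow> (nat \<Rightarrow> nat) \<Rightarrow> (nat \<Rightarrow> nat) \<Rightarrow> bool" where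
  "in_hamming m col x \<longleftrightarrow> (\<forall>s<m. even (\<Sum>t<2 ^ m - 1. x t * abit (col t) s))"

definition S_set :: "(nat \<Rightarrow> nat) \<Rightarrow> nat \<Rightarrow> nat \<Rightarrow> nat \<Rightarrow> nat set" where
  "S_set rk hbar delta q = rk ` {q * (hbar - delta + 1) ..< (q + 1) * (hbar - delta + 1)}"

definition lin_det :: "(('c \<Rightarrow> bool)) \<Rightarrow> 'i set \<Rightarrow> ('i \<Rightarrow> 'c \<Rightarrow> 'a::comm_ring_1) \<Rightarrow> ('c \<Rightarrow> 'a) \<Rightarrow> bool" where
  "lin_det P Idx G Q \<longleftrightarrow> (\<exists>\<kappa>. \<forall>c. P c \<longrightarrow> Q c = (\<Sum>x\<in>Idx. \<kappa> x * G x c))"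

end

theory Submission
  imports Defs "HOL-Computational_Algebra.Polynomial"
begin

text \<open>Add the parity checks at a and at a' = a(i_p, a_{i_p} \<oplus> 1) and use \<theta>^u = 1 on the
  checks t = m + us. Each such t < r gives a moment equation in \bar n + 1 unknowns:
  H_{i_p,i}(a,m) for i \<noteq> i_p, at the evaluation point \<lambda>_{i,a_i}^u shared by a and a', and
  the two rack sums of rack i_p at a and at a', at the distinct points \<lambda>_{i_p,0}^u and
  \<lambda>_{i_p,1}^u. A generalised Vandermonde system of e such equations recovers every unknown
  linearly from all but e of the others: multiply it by the polynomial vanishing at the points
  of the missing unknowns. For |R| = \bar k + 1 there are \bar n - \bar k missing unknowns, and
  the checks m + us with s < \bar n - \bar k stay below r exactly when m < u - v; for
  m \<ge> u - v one check is lost, which the extra helper rack of R' makes up.\<close>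

lemma weighted_poly_sum_eq_0:
  fixes x w Z :: "'i \<Rightarrow> 'a::comm_ring_1"
  assumes moments: "\<forall>s<e. (\<Sum>i\<in>I. w i * x i ^ s * Z i) = 0" and deg: "degree f < e"
  shows "(\<Sum>i\<in>I. w i * poly f (x i) * Z i) = 0"
proof -
  have "(\<Sum>i\<in>I. w i * poly f (x i) * Z i)
      = (\<Sum>i\<in>I. \<Sum>s\<le>degree f. coeff f s * (w i * x i ^ s * Z i))"
    by (rule sum.cong) (simp_all add: poly_altdef sum_distrib_left sum_distrib_right mult_ac)
  also have "\<dots> = (\<Sum>s\<le>degree f. coeff f s * (\<Sum>i\<in>I. w i * x i ^ s * Z i))"
    by (subst sum.swap) (simp add: sum_distrib_left)
  also have "\<dots> = 0"
    using moments deg by (intro sum.neutral) auto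
  finally show ?thesis .
qed

lemma vanishing_moments_recover:
  fixes x w :: "'i \<Rightarrow> 'a::field"
  assumes fin: "finite I" and inj: "inj_on x I" and w_nz: "\<forall>i\<in>I. w i \<noteq> 0"
    and "K \<subseteq> I" and card_missing: "card (I - K) \<le> e" and i0: "i0 \<in> I"
  shows "\<exists>\<kappa>. \<forall>Z. (\<forall>s<e. (\<Sum>i\<in>I. w i * x i ^ s * Z i) = 0) \<longrightarrow> Z i0 = (\<Sum>k\<in>K. \<kappa> k * Z k)"
proof (cases "i0 \<in> K")
  case True
  have "finite K" using fin \<open>K \<subseteq> I\<close> finite_subset by blast
  then have "Z i0 = (\<Sum>k\<in>K. of_bool (k = i0) * Z k)" for Z :: "'i \<Rightarrow> 'a"
    using True by (simp add: if_distrib cong: if_cong)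
  then show ?thesis by (intro exI[of _ "\<lambda>k. of_bool (k = i0)"]) blast
next
  case False
  define J where "J = I - K - {i0}"
  define f where "f = (\<Prod>j\<in>J. [:- x j, 1:])"
  have fin_J: "finite J" and fin_K: "finite K"
    using fin \<open>K \<subseteq> I\<close> finite_subset unfolding J_def by auto
  have poly_f: "poly f y = (\<Prod>j\<in>J. y - x j)" for y
    unfolding f_def poly_prod by simp
  have "degree f \<le> card J"
    using degree_prod_sum_le[OF fin_J, of "\<lambda>j. [:- x j, 1:]"] unfolding f_def by simp
  also have "card J < e"
    using card_missing fin i0 False unfolding J_def
    by (metis Diff_iff card_Diff1_less finite_Diff order_less_le_trans)
  finally have deg_f: "degree f < e" .
  have f_J: "poly f (x j) = 0" if "j \<in> J" for j
    using that fin_J unfolding poly_f by (subst prod_zero_iff) auto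
  have f_i0: "w i0 * poly f (x i0) \<noteq> 0"
    using w_nz i0 inj unfolding poly_f J_def by (auto simp: prod_zero_iff fin inj_on_eq_iff)
  define \<kappa> where "\<kappa> k = - (w k * poly f (x k)) / (w i0 * poly f (x i0))" for k
  show ?thesis
  proof (intro exI allI impI)
    fix Z :: "'i \<Rightarrow> 'a"
    assume "\<forall>s<e. (\<Sum>i\<in>I. w i * x i ^ s * Z i) = 0"
    then have "0 = (\<Sum>i\<in>I. w i * poly f (x i) * Z i)"
      using deg_f by (simp add: weighted_poly_sum_eq_0)
    also have "I = insert i0 K \<union> J"
      using i0 \<open>K \<subseteq> I\<close> unfolding J_def by auto
    also have "(\<Sum>i\<in>insert i0 K \<union> J. w i * poly f (x i) * Z i)
        = w i0 * poly f (x i0) * Z i0 + (\<Sum>k\<in>K. w k * poly f (x k) * Z k)"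
      using fin_K fin_J False f_J by (subst sum.union_disjoint) (auto simp: J_def)
    finally show "Z i0 = (\<Sum>k\<in>K. \<kappa> k * Z k)"
      using f_i0 unfolding \<kappa>_def
      by (simp add: sum_divide_distrib[symmetric] sum_negf field_simps add_eq_0_iff)
  qed
qed

lemma abit_eq_of_bool_bit: "abit a i = of_bool (bit a i)"
  unfolding abit_def by (simp add: bit_iff_odd odd_iff_mod_2_eq_one)

lemma flipb_eq_flip_bit: "flipb a i = flip_bit i a"
proof (cases "bit a i")
  case True
  have "int (unset_bit i a) = int a - 2 ^ i"
    using True by (simp add: of_nat_unset_bit_eq unset_bit_eq bit_of_nat_iff)
  then have "unset_bit i a + 2 ^ i = a"
    by (metis diff_add_cancel of_nat_add of_nat_eq_iff of_nat_numeral
        of_nat_power)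
  then have "a - 2 ^ i = unset_bit i a" by linarith
  with True show ?thesis
    unfolding flipb_def repl_def abit_eq_of_bool_bit by (simp add: flip_bit_eq_if)
next
  case False
  then show ?thesis
    unfolding flipb_def repl_def abit_eq_of_bool_bit by (simp add: flip_bit_eq_if set_bit_eq)
qed

lemma abit_flipb: "abit (flipb a i) j = (if j = i then 1 - abit a i else abit a j)"
  unfolding flipb_eq_flip_bit abit_eq_of_bool_bit by (simp add: bit_flip_bit_iff)

lemma abit_le_1: "abit a i \<le> 1"
  unfolding abit_eq_of_bool_bit by simp

lemma flipb_less_power: "a < 2 ^ N \<Longrightarrow> i < N \<Longrightarrow> flipb a i < 2 ^ N"
  unfolding flipb_eq_flip_bit
  by (metis order.strict_iff_not take_bit_flip_bit_eq take_bit_nat_eq_self_iff)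

lemma mult_order_nonzero: "mult_order x N \<Longrightarrow> x \<noteq> 0"
  unfolding mult_order_def by (metis power_0_left zero_neq_one not_gr0)

lemma mult_order_inj_on_power: "mult_order x N \<Longrightarrow> inj_on (\<lambda>e. x ^ e) {..<N}"
proof -
  assume ord: "mult_order x N"
  have "x ^ e1 \<noteq> x ^ e2" if "e1 < e2" "e2 < N" for e1 e2
  proof
    assume "x ^ e1 = x ^ e2"
    also have "x ^ e2 = x ^ e1 * x ^ (e2 - e1)"
      using that by (simp flip: power_add)
    finally have "x ^ (e2 - e1) = 1"
      using mult_order_nonzero[OF ord] by simp
    then show False
      using ord that unfolding mult_order_def by simp
  qed
  then show ?thesis
    by (intro inj_onI) (metis lessThan_iff linorder_neqE_nat)
qed

lemma lam_power_inj_on: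
  fixes xi :: "'a::field"
  assumes "mult_order xi N" and "2 * nbar * u \<le> N" and "0 < u"
  shows "inj_on (\<lambda>(i, j). lam xi i j ^ u) ({..<nbar} \<times> {..1})"
proof (rule inj_onI, clarify)
  fix i j i' j' :: nat
  assume eq: "lam xi i j ^ u = lam xi i' j' ^ u"
    and mem: "j \<le> 1" "i < nbar" "j' \<le> 1" "i' < nbar"
  have exponent_less: "(2 * i + j) * u < N" if "i < nbar" "j \<le> 1" for i j
  proof -
    have "2 * i + j < 2 * nbar" using that by simp
    then have "(2 * i + j) * u < 2 * nbar * u" using \<open>0 < u\<close> by (rule mult_less_mono1)
    then show ?thesis using assms(2) by (rule order_less_le_trans)
  qed
  have "(2 * i + j) * u = (2 * i' + j') * u"
    by (rule inj_onD[OF mult_order_inj_on_power[OF assms(1)]])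
      (use eq mem exponent_less in \<open>auto simp: lam_def power_mult\<close>)
  then have "2 * i + j = 2 * i' + j'" using \<open>0 < u\<close> by simp
  with mem show "i = i' \<and> j = j'" by presburger
qed

lemma in_code_rack_sum_eq_0:
  fixes theta xi :: "'a::field"
  assumes "in_code theta xi nbar u r c" and "theta ^ u = 1"
    and "a < 2 ^ nbar" and "m + u * s < r"
  shows "(\<Sum>i<nbar. lam xi i (abit a i) ^ (m + u * s) * rack_sum theta u c i a m) = 0"
proof -
  have "theta ^ (g * (m + u * s)) = theta ^ (g * m) * (theta ^ u) ^ (g * s)" for g
    by (simp add: algebra_simps power_add flip: power_mult)
  then have "theta ^ (g * (m + u * s)) = theta ^ (g * m)" for g
    using \<open>theta ^ u = 1\<close> by simp
  moreover have "(\<Sum>i<nbar. \<Sum>g<u. theta ^ (g * (m + u * s)) * lam xi i (abit a i) ^ (m + u * s)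
      * c (i * u + g) a) = 0"
    using assms(1,3,4) unfolding in_code_def by blast
  ultimately show ?thesis
    unfolding rack_sum_def by (simp add: sum_distrib_left mult_ac)
qed

text \<open>Index nbar stands for rack i_p read at flipb a ip; every other index i stands for
  rack i read at a, merged with its reading at flipb a ip when i \<noteq> ip.\<close>

definition paired_point :: "'a::field \<Rightarrow> nat \<Rightarrow> nat \<Rightarrow> nat \<Rightarrow> nat \<Rightarrow> 'a" where
  "paired_point xi nbar ip a i =
     (if i = nbar then lam xi ip (abit (flipb a ip) ip) else lam xi i (abit a i))"

definition paired_value ::
    "'a::field \<Rightarrow> nat \<Rightarrow> (nat \<Rightarrow> nat \<Rightarrow> 'a) \<Rightarrow> nat \<Rightarrow> nat \<Rightarrow> nat \<Rightarrow> nat \<Rightarrow> nat \<Rightarrow> 'a" where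
  "paired_value theta u c nbar ip a m i =
     (if i = nbar then rack_sum theta u c ip (flipb a ip) m
      else if i = ip then rack_sum theta u c ip a m
      else Hq theta u c ip i a m)"

lemma paired_point_inj_on:
  fixes xi :: "'a::field"
  assumes "mult_order xi N" and "2 * nbar * u \<le> N" and "0 < u" and "ip < nbar"
  shows "inj_on (\<lambda>i. paired_point xi nbar ip a i ^ u) {..nbar}"
proof -
  define pos where "pos i = (if i = nbar then (ip, abit (flipb a ip) ip) else (i, abit a i))" for i
  have "inj_on pos {..nbar}"
  proof -
    have "1 - abit a ip \<noteq> abit a ip" using abit_le_1[of a ip] by presburger
    then show ?thesis
      using \<open>ip < nbar\<close> by (intro inj_onI) (auto simp: pos_def abit_flipb split: if_splits)
  qed
  moreover have "pos ` {..nbar} \<subseteq> {..<nbar} \<times> {..1}"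
    using \<open>ip < nbar\<close> abit_le_1 by (auto simp: pos_def)
  ultimately have "inj_on ((\<lambda>(i, j). lam xi i j ^ u) \<circ> pos) {..nbar}"
    using lam_power_inj_on[OF assms(1-3)] by (blast intro: comp_inj_on inj_on_subset)
  then show ?thesis
    by (rule inj_on_cong[THEN iffD1, rotated]) (simp add: pos_def paired_point_def)
qed

lemma paired_code_equation:
  fixes theta xi :: "'a::field"
  assumes code: "in_code theta xi nbar u r c" and "theta ^ u = 1"
    and "ip < nbar" and a: "a < 2 ^ nbar" and "m + u * s < r"
  shows "(\<Sum>i\<le>nbar. paired_point xi nbar ip a i ^ (m + u * s)
            * paired_value theta u c nbar ip a m i) = 0"
proof -
  define t where "t = m + u * s"
  define a' where "a' = flipb a ip"
  define f where "f i = lam xi i (abit a i) ^ t * rack_sum theta u c i a m" for i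
  define g where "g i = lam xi i (abit a' i) ^ t * rack_sum theta u c i a' m" for i
  have a': "a' < 2 ^ nbar"
    unfolding a'_def using a \<open>ip < nbar\<close> by (rule flipb_less_power)
  have term_eq: "paired_point xi nbar ip a i ^ t * paired_value theta u c nbar ip a m i
      = f i + g i - (if i = ip then g i else 0)" if "i < nbar" for i
    using that unfolding paired_point_def paired_value_def f_def g_def a'_def Hq_def rack_sum_def
    by (simp add: abit_flipb distrib_left)
  have "paired_point xi nbar ip a nbar ^ t * paired_value theta u c nbar ip a m nbar = g ip"
    by (simp add: paired_point_def paired_value_def g_def a'_def)
  then have "(\<Sum>i\<le>nbar. paired_point xi nbar ip a i ^ t * paired_value theta u c nbar ip a m i)
      = (\<Sum>i<nbar. paired_point xi nbar ip a i ^ t * paired_value theta u c nbar ip a m i) + g ip"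
    by (simp add: lessThan_Suc_atMost[symmetric])
  also have "\<dots> = (\<Sum>i<nbar. f i + g i - (if i = ip then g i else 0)) + g ip"
    by (simp add: term_eq)
  also have "\<dots> = (\<Sum>i<nbar. f i) + (\<Sum>i<nbar. g i)"
    using \<open>ip < nbar\<close> by (simp add: sum.distrib sum_subtractf)
  also have "\<dots> = 0"
    using in_code_rack_sum_eq_0[OF code \<open>theta ^ u = 1\<close>] a a' \<open>m + u * s < r\<close>
    unfolding f_def g_def t_def by simp
  finally show ?thesis unfolding t_def .
qed

lemma paired_value_recover:
  fixes theta xi :: "'a::field"
  assumes "theta ^ u = 1" and "0 < u" and "mult_order xi N" and "2 * nbar * u \<le> N"
    and "ip < nbar" and "a < 2 ^ nbar"
    and K: "K \<subseteq> {..<nbar} - {ip}" and "card ({..nbar} - K) \<le> e"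
    and checks: "\<forall>s<e. m + u * s < r" and "i0 \<le> nbar"
  shows "\<exists>\<kappa>. \<forall>c. in_code theta xi nbar u r c \<longrightarrow>
    paired_value theta u c nbar ip a m i0 = (\<Sum>k\<in>K. \<kappa> k * Hq theta u c ip k a m)"
proof -
  let ?x = "\<lambda>i. paired_point xi nbar ip a i ^ u"
  let ?w = "\<lambda>i. paired_point xi nbar ip a i ^ m"
  have w_nz: "\<forall>i\<in>{..nbar}. ?w i \<noteq> 0"
    using mult_order_nonzero[OF assms(3)] by (simp add: paired_point_def lam_def)
  have "K \<subseteq> {..nbar}" using K by auto
  then obtain \<kappa> where \<kappa>: "\<forall>Z. (\<forall>s<e. (\<Sum>i\<le>nbar. ?w i * ?x i ^ s * Z i) = 0)
      \<longrightarrow> Z i0 = (\<Sum>k\<in>K. \<kappa> k * Z k)"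
    using vanishing_moments_recover[OF finite_atMost paired_point_inj_on[OF assms(3,4,2,5)] w_nz
        _ assms(8)] assms(10)
    by blast
  have weight_power: "?w i * ?x i ^ s = paired_point xi nbar ip a i ^ (m + u * s)" for i s
    by (simp add: power_add power_mult)
  show ?thesis
  proof (intro exI allI impI)
    fix c assume code: "in_code theta xi nbar u r c"
    have "(\<Sum>i\<le>nbar. ?w i * ?x i ^ s * paired_value theta u c nbar ip a m i) = 0" if "s < e" for s
      using paired_code_equation[OF code assms(1,5,6), of m s] checks that
      by (simp only: weight_power)
    then have "paired_value theta u c nbar ip a m i0
        = (\<Sum>k\<in>K. \<kappa> k * paired_value theta u c nbar ip a m k)"
      using \<kappa> by blast
    also have "\<dots> = (\<Sum>k\<in>K. \<kappa> k * Hq theta u c ip k a m)"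
      using K by (intro sum.cong) (auto simp: paired_value_def)
    finally show "paired_value theta u c nbar ip a m i0 = (\<Sum>k\<in>K. \<kappa> k * Hq theta u c ip k a m)" .
  qed
qed

lemma lin_det_image:
  assumes "finite Idx" and "h ` K \<subseteq> Idx" and "inj_on h K"
    and "\<forall>c. P c \<longrightarrow> Q c = (\<Sum>k\<in>K. \<kappa> k * G (h k) c)"
  shows "lin_det P Idx G Q"
  unfolding lin_det_def
proof (intro exI allI impI)
  define \<kappa>' where "\<kappa>' y = (if y \<in> h ` K then \<kappa> (inv_into K h y) else 0)" for y
  fix c assume "P c"
  have "(\<Sum>y\<in>Idx. \<kappa>' y * G y c) = (\<Sum>y\<in>h ` K. \<kappa>' y * G y c)"
    using assms(1,2) by (intro sum.mono_neutral_right) (auto simp: \<kappa>'_def)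
  also have "\<dots> = (\<Sum>k\<in>K. \<kappa> k * G (h k) c)"
    using assms(3) by (simp add: sum.reindex \<kappa>'_def)
  finally show "Q c = (\<Sum>y\<in>Idx. \<kappa>' y * G y c)"
    using assms(4) \<open>P c\<close> by simp
qed

definition rack_repairable ::
    "'a::field \<Rightarrow> 'a \<Rightarrow> nat \<Rightarrow> nat \<Rightarrow> nat \<Rightarrow> nat set \<Rightarrow> nat \<Rightarrow> (nat \<times> nat \<times> nat) set \<Rightarrow> nat \<Rightarrow> nat \<Rightarrow> bool"
  where
  "rack_repairable theta xi nbar u r F ip Idx m a \<longleftrightarrow>
     lin_det (in_code theta xi nbar u r) Idx
       (\<lambda>(j, m', a') c. Hq theta u c ip j a' m') (\<lambda>c. rack_sum theta u c ip a m) \<and>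
     lin_det (in_code theta xi nbar u r) Idx
       (\<lambda>(j, m', a') c. Hq theta u c ip j a' m') (\<lambda>c. rack_sum theta u c ip (flipb a ip) m) \<and>
     (\<forall>i\<in>F - {ip}. lin_det (in_code theta xi nbar u r) Idx
       (\<lambda>(j, m', a') c. Hq theta u c ip j a' m') (\<lambda>c. Hq theta u c ip i a m))"

lemma rack_repairable_if_enough_checks:
  fixes theta xi :: "'a::field"
  assumes "theta ^ u = 1" and "0 < u" and "mult_order xi N" and "2 * nbar * u \<le> N"
    and "F \<subseteq> {..<nbar}" and "ip \<in> F" and "K \<subseteq> {..<nbar} - F" and "card ({..nbar} - K) \<le> e"
    and "\<forall>s<e. m + u * s < r"
    and "finite M" and "m \<in> M" and "finite A" and "a \<in> A" and "a < 2 ^ nbar"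
  shows "rack_repairable theta xi nbar u r F ip (K \<times> M \<times> A) m a"
proof -
  have ip: "ip < nbar" and K: "K \<subseteq> {..<nbar} - {ip}"
    using assms(5-7) by auto
  have "finite K"
    using assms(7) by (rule finite_subset) simp
  let ?lin_det = "lin_det (in_code theta xi nbar u r) (K \<times> M \<times> A)
      (\<lambda>(j, m', a') c. Hq theta u c ip j a' m')"
  have paired: "?lin_det (\<lambda>c. paired_value theta u c nbar ip a m i0)" if i0: "i0 \<le> nbar" for i0
  proof -
    obtain \<kappa> where "\<forall>c. in_code theta xi nbar u r c \<longrightarrow>
        paired_value theta u c nbar ip a m i0 = (\<Sum>k\<in>K. \<kappa> k * Hq theta u c ip k a m)"
      using paired_value_recover[OF assms(1-4) ip assms(14) K assms(8,9) i0] by blast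
    then show ?thesis
      using \<open>finite K\<close> assms(10-13)
      by (intro lin_det_image[where h = "\<lambda>k. (k, m, a)" and \<kappa> = \<kappa>]) (auto intro: inj_onI)
  qed
  have "?lin_det (\<lambda>c. rack_sum theta u c ip a m)"
    using paired[of ip] ip by (simp add: paired_value_def)
  moreover have "?lin_det (\<lambda>c. rack_sum theta u c ip (flipb a ip) m)"
    using paired[of nbar] by (simp add: paired_value_def)
  moreover have "?lin_det (\<lambda>c. Hq theta u c ip i a m)" if "i \<in> F - {ip}" for i
    using paired[of i] that assms(5) by (auto simp: paired_value_def)
  ultimately show ?thesis
    unfolding rack_repairable_def by blast
qed

lemma check_exponent_less:
  fixes m v u s j e :: nat
  assumes "m + v < u * Suc j" and "s + j < e"
  shows "m + u * s < e * u - v"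
proof -
  have "u * (s + Suc j) \<le> u * e"
    using assms(2) by (intro mult_le_mono2) simp
  then show ?thesis
    using assms(1) by (simp add: algebra_simps)
qed

lemma rack_repairable_from_helpers:
  fixes theta xi :: "'a::field"
  assumes "theta ^ u = 1" and "0 < u" and "mult_order xi N" and "2 * nbar * u \<le> N"
    and "F \<subseteq> {..<nbar}" and "ip \<in> F" and "R \<subseteq> {..<nbar} - F" and "card R = kbar + 1 + j"
    and "r = (nbar - kbar) * u - v" and "m + v < u * Suc j"
    and "finite M" and "m \<in> M" and "finite A" and "a \<in> A" and "a < 2 ^ nbar"
  shows "rack_repairable theta xi nbar u r F ip (R \<times> M \<times> A) m a"
proof (rule rack_repairable_if_enough_checks[OF assms(1-7) _ _ assms(11-15)])
  show "card ({..nbar} - R) \<le> nbar - kbar - j"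
    using assms(7,8) by (subst card_Diff_subset) (auto intro: finite_subset)
  show "\<forall>s < nbar - kbar - j. m + u * s < r"
    using check_exponent_less[OF assms(10)] assms(9) by auto
qed

theorem lemma4:
  fixes theta xi :: "'a::{field,finite}"
    and nbar u kbar v n k r dbar hbar delta mbar l p :: nat
    and rk :: "nat \<Rightarrow> nat" and col :: "nat \<Rightarrow> nat"
  assumes "1 < u" and "v < u"
    and "n = nbar * u" and "k = kbar * u + v" and "r = n - k"
    and "dbar = kbar + 1"
    and "1 \<le> delta" and "delta < hbar" and "dbar \<le> nbar - hbar"
    and "1 \<le> mbar" and "hbar - delta + 2 = 2 ^ mbar" and "(hbar - delta + 1) dvd hbar"
    and "l = 2 ^ nbar"
    and "2 * n + 1 \<le> card (UNIV :: 'a set)"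
    and "mult_order theta u" and "primitive_elem xi"
    and "hamming_cols mbar col"
    and "inj_on rk {..<hbar}" and "rk ` {..<hbar} \<subseteq> {..<nbar}"
    and "p < hbar"
  shows
   "let F = rk ` {..<hbar};
        S = S_set rk hbar delta (p div (hbar - delta + 1));
        ip = rk p;
        Cd = in_code theta xi nbar u r;
        A = {a'. a' < l \<and> in_hamming mbar col (puncture a' S)}
    in
    (\<forall>b R. 1 \<le> b \<and> b \<le> u - v \<and> R \<subseteq> {..<nbar} - F \<and> card R = dbar \<longrightarrow>
      (let Idx = R \<times> {..<b} \<times> A;
           G = (\<lambda>(j, m', a') c. Hq theta u c ip j a' m')
       in \<forall>m<b. \<forall>a\<in>A.
           lin_det Cd Idx G (\<lambda>c. rack_sum theta u c ip a m) \<and>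
           lin_det Cd Idx G (\<lambda>c. rack_sum theta u c ip (flipb a ip) m) \<and>
           (\<forall>i\<in>F - {ip}. lin_det Cd Idx G (\<lambda>c. Hq theta u c ip i a m)))) \<and>
    (\<forall>b R'. u - v + 1 \<le> b \<and> b \<le> u \<and> R' \<subseteq> {..<nbar} - F \<and> card R' = dbar + 1 \<longrightarrow>
      (let Idx = R' \<times> {u - v..<b} \<times> A;
           G = (\<lambda>(j, m', a') c. Hq theta u c ip j a' m')
       in \<forall>m\<in>{u - v..<b}. \<forall>a\<in>A.
           lin_det Cd Idx G (\<lambda>c. rack_sum theta u c ip a m) \<and>
           lin_det Cd Idx G (\<lambda>c. rack_sum theta u c ip (flipb a ip) m) \<and>
           (\<forall>i\<in>F - {ip}. lin_det Cd Idx G (\<lambda>c. Hq theta u c ip i a m))))"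
proof -
  let ?F = "rk ` {..<hbar}" and ?ip = "rk p"
  let ?A = "{a'. a' < l \<and>
    in_hamming mbar col (puncture a' (S_set rk hbar delta (p div (hbar - delta + 1))))}"
  define N where "N = card (UNIV :: 'a set) - 1"
  have "theta ^ u = 1" and "0 < u"
    using assms(15) unfolding mult_order_def by auto
  moreover have "mult_order xi N" and "2 * nbar * u \<le> N"
    using assms(3,14,16) unfolding N_def primitive_elem_def by auto
  moreover have "r = (nbar - kbar) * u - v"
    using assms(3-5) by (simp add: diff_mult_distrib)
  ultimately have repair: "\<forall>a\<in>?A. rack_repairable theta xi nbar u r ?F ?ip (R \<times> M \<times> ?A) m a"
    if "R \<subseteq> {..<nbar} - ?F" "card R = dbar + j" "m + v < u * Suc j" "finite M" "m \<in> M"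
    for R M m j
    using that assms(6,13,19,20) by (intro ballI rack_repairable_from_helpers) auto
  have part1: "\<forall>a\<in>?A. rack_repairable theta xi nbar u r ?F ?ip (R \<times> {..<b} \<times> ?A) m a"
    if "b \<le> u - v" "R \<subseteq> {..<nbar} - ?F" "card R = dbar" "m < b" for b R m
    using that by (intro repair[where j = 0]) auto
  have part2: "\<forall>m\<in>{u - v..<b}. \<forall>a\<in>?A.
      rack_repairable theta xi nbar u r ?F ?ip (R \<times> {u - v..<b} \<times> ?A) m a"
    if "b \<le> u" "R \<subseteq> {..<nbar} - ?F" "card R = dbar + 1" for b R
    using that assms(2) by (intro ballI repair[where j = 1]) auto
  show ?thesis
    unfolding Let_def
    by (intro conjI allI impI; elim conjE)
      (rule part1[unfolded rack_repairable_def] part2[unfolded rack_repairable_def]; assumption)+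
qed

end
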